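(* Let the sequence $(y_k)_{k\in\mathbb{N}}$ be defined by $y_1=2$ and $(2k-1)^2y_k=4(k-1)^2y_{k-1}+2$ for $k\ge2$. Then $$\frac{\ln k}{2k}<y_k\le\frac{\ln k+4}{2k}\qquad\text{for all } k\in\mathbb{N}.$$ *)

theory Defs
  imports Complex_Main
begin

text \<open>The sequence y_k (k \<ge> 1): y_1 = 2 and (2k-1)^2 y_k = 4(k-1)^2 y_{k-1} + 2 for k \<ge> 2.
  The value at index 0 is an irrelevant placeholder.\<close>
fun y :: "nat \<Rightarrow> real" where
  "y 0 = 0"
| "y (Suc 0) = 2"
| "y (Suc (Suc n)) =
     (4 * (real (Suc n))^2 * y (Suc n) + 2) / (2 * real (Suc (Suc n)) - 1)^2"

lemma y_rec:
  assumes "k \<ge> 2"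
  shows "(2 * real k - 1)^2 * y k = 4 * (real k - 1)^2 * y (k - 1) + 2"
proof -
  obtain n where k: "k = Suc (Suc n)" using assms by (metis add_2_eq_Suc le_Suc_ex)
  have "(2 * real k - 1) \<noteq> 0" using assms by simp
  then show ?thesis unfolding k by (simp add: field_simps)
qed

end

theory Submission
  imports Defs "HOL-Analysis.Harmonic_Numbers"
begin

text \<open>
  For \<open>z\<^sub>k = 2k y\<^sub>k\<close> the recursion becomes
  \<open>(2k+1)\<^sup>2 z\<^sub>k\<^sub>+\<^sub>1 = 4k(k+1) z\<^sub>k + 4(k+1)\<close>, whose right-hand side is increasing in \<open>z\<^sub>k\<close>.
  Hence it suffices to show that \<open>ln x (1 + 1/(3x))\<close> is a sub-solution and \<open>ln x + 4\<close> a
  super-solution of this recursion for \<open>x \<ge> 1\<close>; both follow from the trapezoid and midpoint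
  bounds for \<open>ln (x+1) - ln x\<close>. Plain \<open>ln x\<close> is not a sub-solution; the factor
  \<open>1 + 1/(3x)\<close> repairs this and also makes the lower bound strict for \<open>k \<ge> 2\<close>.
\<close>

lemma scaled_y_Suc:
  assumes "k \<ge> 1"
  shows "(2 * real k + 1)^2 * (2 * real (Suc k) * y (Suc k))
         = 4 * real k * (real k + 1) * (2 * real k * y k) + 4 * (real k + 1)"
proof -
  have rec: "(2 * real k + 1)^2 * y (Suc k) = 4 * (real k)^2 * y k + 2"
    using y_rec[of "Suc k"] assms by (simp add: algebra_simps)
  have "(2 * real k + 1)^2 * (2 * real (Suc k) * y (Suc k))
      = 2 * (real k + 1) * ((2 * real k + 1)^2 * y (Suc k))"
    by (simp add: algebra_simps)
  also have "\<dots> = 2 * (real k + 1) * (4 * (real k)^2 * y k + 2)"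
    by (simp only: rec)
  finally show ?thesis
    by (simp add: algebra_simps power2_eq_square)
qed

lemma ln_Suc_diff_bounds:
  fixes x :: real
  assumes "x > 0"
  shows "2 / (2 * x + 1) \<le> ln (x + 1) - ln x"
    and "ln (x + 1) - ln x \<le> (2 * x + 1) / (2 * x * (x + 1))"
proof -
  show "2 / (2 * x + 1) \<le> ln (x + 1) - ln x"
    using ln_inverse_approx_ge[of x "x + 1"] assms by simp
  have "ln (x + 1) - ln x \<le> 1 * (inverse x + inverse (x + 1)) / 2"
    using ln_inverse_approx_le[of x 1] assms by simp
  also have "\<dots> = (2 * x + 1) / (2 * x * (x + 1))"
    using assms by (simp add: field_simps)
  finally show "ln (x + 1) - ln x \<le> (2 * x + 1) / (2 * x * (x + 1))" .
qed

lemma ln_Suc_diff_weighted_le: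
  fixes x :: real
  assumes "x \<ge> 1"
  shows "(2 * x + 1)^2 * (3 * x + 4) * (ln (x + 1) - ln x) \<le> 12 * (x + 1)^2"
proof -
  have poly: "(2 * x + 1)^3 * (3 * x + 4) \<le> 24 * x * (x + 1)^3"
  proof -
    have "24 * x * (x + 1)^3 - (2 * x + 1)^3 * (3 * x + 4) = 4 * x^3 + 6 * x^2 - 3 * x - 4"
      by (simp add: algebra_simps power2_eq_square power3_eq_cube)
    moreover have "x^3 \<ge> 1" "x^2 \<ge> x"
      using assms by (simp_all add: power2_eq_square)
    ultimately show ?thesis using assms by linarith
  qed
  have "(2 * x + 1)^2 * (3 * x + 4) * (ln (x + 1) - ln x)
      \<le> (2 * x + 1)^2 * (3 * x + 4) * ((2 * x + 1) / (2 * x * (x + 1)))"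
    using ln_Suc_diff_bounds(2)[of x] assms by (intro mult_left_mono) auto
  also have "\<dots> = (2 * x + 1)^3 * (3 * x + 4) / (2 * x * (x + 1))"
    by (simp add: power2_eq_square power3_eq_cube)
  also have "\<dots> \<le> 24 * x * (x + 1)^3 / (2 * x * (x + 1))"
    using poly assms by (intro divide_right_mono) auto
  also have "\<dots> = 12 * (x + 1)^2 * (2 * x * (x + 1)) / (2 * x * (x + 1))"
    by (simp add: algebra_simps power2_eq_square power3_eq_cube)
  also have "\<dots> = 12 * (x + 1)^2"
    using assms by (intro nonzero_mult_div_cancel_right) simp
  finally show ?thesis .
qed

lemma lower_barrier_step:
  fixes x :: real
  assumes "x \<ge> 1"
  shows "(2 * x + 1)^2 * (ln (x + 1) * (1 + 1 / (3 * (x + 1))))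
         \<le> 4 * x * (x + 1) * (ln x * (1 + 1 / (3 * x))) + 4 * (x + 1)"
proof -
  define d where "d = ln (x + 1) - ln x"
  have d_term: "(2 * x + 1)^2 * (3 * x + 4) * d \<le> 12 * (x + 1)^2"
    using ln_Suc_diff_weighted_le[OF assms] by (simp add: d_def)
  \<comment> \<open>After multiplying by \<open>3(x+1)\<close>, the coefficients of \<open>ln x\<close> on both sides differ by exactly \<open>x\<close>.\<close>
  have "x * ln x \<ge> 0"
    using assms by simp
  with d_term have main: "(2 * x + 1)^2 * (3 * x + 4) * (ln x + d)
      \<le> 4 * (x + 1)^2 * (3 * x + 1) * ln x + 12 * (x + 1)^2"
    by (simp add: algebra_simps power2_eq_square)
  have "(2 * x + 1)^2 * (ln (x + 1) * (1 + 1 / (3 * (x + 1))))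
      = (2 * x + 1)^2 * (3 * x + 4) * (ln x + d) / (3 * (x + 1))"
    using assms by (simp add: d_def field_simps)
  also have "\<dots> \<le> (4 * (x + 1)^2 * (3 * x + 1) * ln x + 12 * (x + 1)^2) / (3 * (x + 1))"
    using main assms by (intro divide_right_mono) auto
  also have "\<dots> = 4 * x * (x + 1) * (ln x * (1 + 1 / (3 * x))) + 4 * (x + 1)"
    using assms by (simp add: field_simps power2_eq_square)
  finally show ?thesis .
qed

lemma upper_barrier_step:
  fixes x :: real
  assumes "x \<ge> 1"
  shows "4 * x * (x + 1) * (ln x + 4) + 4 * (x + 1) \<le> (2 * x + 1)^2 * (ln (x + 1) + 4)"
proof -
  define d where "d = ln (x + 1) - ln x"
  have "2 / (2 * x + 1) \<le> d"
    using ln_Suc_diff_bounds(1)[of x] assms by (simp add: d_def)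
  then have "2 \<le> (2 * x + 1) * d"
    using assms by (simp add: pos_divide_le_eq mult.commute)
  then have "(2 * x + 1) * 2 \<le> (2 * x + 1) * ((2 * x + 1) * d)"
    using assms by (intro mult_left_mono) auto
  then have d_term: "2 * (2 * x + 1) \<le> (2 * x + 1)^2 * d"
    by (simp add: power2_eq_square mult_ac)
  have "4 * x * (x + 1) * ln x \<le> (2 * x + 1)^2 * ln x"
    using assms by (intro mult_right_mono) (auto simp: power2_eq_square algebra_simps)
  with d_term show ?thesis
    by (simp add: d_def algebra_simps power2_eq_square)
qed

lemma scaled_y_bounds:
  assumes "k \<ge> 1"
  shows "ln (real k) * (1 + 1 / (3 * real k)) \<le> 2 * real k * y k
         \<and> 2 * real k * y k \<le> ln (real k) + 4"
  using assms
proof (induction k rule: nat_induct_at_least)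
  case base
  then show ?case by simp
next
  case (Suc k)
  let ?x = "real k" and ?z = "2 * real k * y k" and ?z' = "2 * real (Suc k) * y (Suc k)"
  have x: "?x \<ge> 1" and pos: "(2 * ?x + 1)^2 > 0"
    using Suc.hyps by simp_all
  have step: "(2 * ?x + 1)^2 * ?z' = 4 * ?x * (?x + 1) * ?z + 4 * (?x + 1)"
    using scaled_y_Suc[OF Suc.hyps] .
  have mono: "4 * ?x * (?x + 1) \<ge> 0"
    by simp
  have "(2 * ?x + 1)^2 * (ln (?x + 1) * (1 + 1 / (3 * (?x + 1)))) \<le> (2 * ?x + 1)^2 * ?z'"
    using lower_barrier_step[OF x] mult_left_mono[OF conjunct1[OF Suc.IH] mono]
    unfolding step by linarith
  moreover have "(2 * ?x + 1)^2 * ?z' \<le> (2 * ?x + 1)^2 * (ln (?x + 1) + 4)"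
    using upper_barrier_step[OF x] mult_left_mono[OF conjunct2[OF Suc.IH] mono]
    unfolding step by linarith
  ultimately show ?case
    using pos by (simp add: add.commute)
qed

theorem lemma4p4:
  fixes k :: nat
  assumes "k \<ge> 1"
  shows "ln (real k) / (2 * real k) < y k \<and> y k \<le> (ln (real k) + 4) / (2 * real k)"
proof -
  have k: "real k > 0"
    using assms by simp
  have strict: "ln (real k) < ln (real k) * (1 + 1 / (3 * real k))" if "k \<noteq> 1"
  proof -
    have "ln (real k) > 0"
      using assms that by simp
    with k show ?thesis
      by (simp add: field_simps)
  qed
  have "ln (real k) < 2 * real k * y k"
    using scaled_y_bounds[OF assms] strict by (cases "k = 1") auto
  then show ?thesis
    using scaled_y_bounds[OF assms] k by (simp add: field_simps)
qed

end
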